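(* Let $\{X_t:t\ge0\}$ be a Lévy process on $\mathbb R^d$, let $Y\sim N(0,A)$ with $A\ne0$ a symmetric nonnegative-definite matrix, let $a:(0,\infty)\to(0,\infty)$, $\xi:(0,\infty)\to\mathbb R^d$, let $c\in\{0,\infty\}$, and assume $a_tX_t-\xi_t\xrightarrow{d}Y$ as $t\to c$. 1. If $c=0$, then $\lim_{t\downarrow0}a_t=\infty$ and $a_{1/t}\sim a_{1/(t+1)}$ as $t\to\infty$. 2. If $c=\infty$, then $\lim_{t\to\infty}a_t=0$ and $a_t\sim a_{t+1}$ as $t\to\infty$.
   Context: A Lévy process is a stochastically continuous process with $X_0=0$ and stationary independent increments. $N(0,A)$ is the centered Gaussian distribution with covariance $A$. $f\sim g$ as $t\to\infty$ means $f(t)/g(t)\to1$. *)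

theory Defs
  imports "HOL-Probability.Probability" "HOL-Library.Landau_Symbols"
begin

definition levy_process :: "'a measure \<Rightarrow> (real \<Rightarrow> 'a \<Rightarrow> real ^ 'd) \<Rightarrow> bool" where
  "levy_process M X \<longleftrightarrow>
     prob_space M \<and>
     (\<forall>t\<ge>0. X t \<in> borel_measurable M) \<and>
     (AE \<omega> in M. X 0 \<omega> = 0) \<and>
     \<comment> \<open>independent increments\<close>
     (\<forall>(n::nat) (s::nat \<Rightarrow> real). 0 \<le> s 0 \<and> (\<forall>i<n. s i \<le> s (Suc i)) \<longrightarrow>
        prob_space.indep_vars M (\<lambda>_. borel) (\<lambda>i \<omega>. X (s (Suc i)) \<omega> - X (s i) \<omega>) {..<n}) \<and>
     \<comment> \<open>stationary increments\<close>
     (\<forall>s\<ge>0. \<forall>t\<ge>0. distr M borel (\<lambda>\<omega>. X (s + t) \<omega> - X s \<omega>) = distr M borel (X t)) \<and>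
     \<comment> \<open>stochastic continuity\<close>
     (\<forall>t\<ge>0. \<forall>\<epsilon>>0.
        ((\<lambda>s. measure M {\<omega> \<in> space M. dist (X s \<omega>) (X t \<omega>) > \<epsilon>}) \<longlongrightarrow> 0) (at t within {0..}))"

definition weak_conv_filter :: "('b \<Rightarrow> ('a::metric_space) measure) \<Rightarrow> 'a measure \<Rightarrow> 'b filter \<Rightarrow> bool" where
  "weak_conv_filter \<mu> \<nu> F \<longleftrightarrow>
     (\<forall>f :: 'a \<Rightarrow> real. continuous_on UNIV f \<and> bounded (range f) \<longrightarrow>
        ((\<lambda>t. integral\<^sup>L (\<mu> t) f) \<longlongrightarrow> integral\<^sup>L \<nu> f) F)"

definition centered_gaussian :: "real ^ 'd ^ 'd \<Rightarrow> (real ^ 'd) measure \<Rightarrow> bool" where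
  "centered_gaussian A \<mu> \<longleftrightarrow>
     prob_space \<mu> \<and> sets \<mu> = sets borel \<and>
     (\<forall>z. (CLINT x | \<mu>. cis (z \<bullet> x)) = complex_of_real (exp (- (z \<bullet> (A *v z)) / 2)))"

end

theory Submission
  imports Defs "HOL-Real_Asymp.Real_Asymp"
begin

text \<open>
  Project onto a direction \<open>z\<close> with \<open>s = z \<bullet> (A *v z) > 0\<close>: the real variables
  \<open>a t * (z \<bullet> X t) - z \<bullet> \<xi> t\<close> converge to \<open>N(0, s)\<close>. The characteristic function \<open>\<phi>\<^sub>t\<close> of
  \<open>z \<bullet> X t\<close> is multiplicative in time, \<open>\<phi>\<^sub>s\<^sub>+\<^sub>t = \<phi>\<^sub>s \<phi>\<^sub>t\<close>, and
  \<open>\<bar>\<phi>\<^sub>t (a t * u)\<bar> \<rightarrow> exp (- s u\<^sup>2 / 2)\<close>.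
  As \<open>t \<rightarrow> 0\<close>, stochastic continuity makes \<open>\<phi>\<^sub>t \<rightarrow> 1\<close> uniformly on bounded frequencies, so
  \<open>a t\<close> cannot stay bounded. As \<open>t \<rightarrow> \<infinity>\<close>, \<open>\<bar>\<phi>\<^sub>1 (a t * u)\<bar>\<^bsup>\<lfloor>t\<rfloor>\<^esup> \<ge> \<bar>\<phi>\<^sub>t (a t * u)\<bar>\<close> forces
  \<open>\<bar>\<phi>\<^sub>1 (a t * u)\<bar> \<rightarrow> 1\<close>; after symmetrization, \<open>a t\<close> times a nondegenerate increment tends
  to \<open>0\<close> in law, hence \<open>a t \<rightarrow> 0\<close>.
  For the ratios, write the later time as \<open>\<tau> + \<delta>\<close> where \<open>\<tau>\<close> contains \<open>\<lfloor>t\<rfloor>\<close> copies of \<open>\<delta>\<close>.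
  Then \<open>\<bar>\<phi>\<^sub>\<delta>\<bar> \<rightarrow> 1\<close> at the relevant frequencies, so the laws at \<open>\<tau>\<close> and \<open>\<tau> + \<delta>\<close>, rescaled by
  \<open>a (\<tau> + \<delta>) / a \<tau>\<close> and by its inverse, have the same Gaussian limit, and convergence of
  types gives \<open>a (\<tau> + \<delta>) / a \<tau> \<rightarrow> 1\<close>.
\<close>

lemma norm_iexp_diff_le: "cmod (iexp x - iexp y) \<le> \<bar>x - y\<bar>"
proof -
  have "iexp x - iexp y = iexp y * (iexp (x - y) - 1)"
    by (simp add: algebra_simps flip: exp_add)
  then have "cmod (iexp x - iexp y) = cmod (iexp (x - y) - 1)"
    by (simp add: norm_mult)
  also have "\<dots> \<le> \<bar>x - y\<bar>"
    using iexp_approx1[of "x - y" 0] by simp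
  finally show ?thesis .
qed

lemma norm_iexp_diff_le_2: "cmod (iexp x - iexp y) \<le> 2"
  using norm_triangle_ineq4[of "iexp x" "iexp y"] by (simp del: of_real_mult)

text \<open>Via Skorohod's representation, the difference of characteristic functions becomes an
  expectation controlled by dominated convergence, uniformly for bounded arguments.\<close>
lemma char_conv_uniform_on_bounded_sequentially:
  fixes \<mu> :: "nat \<Rightarrow> real measure" and L :: "real measure" and r :: "nat \<Rightarrow> real"
  assumes \<mu>: "\<And>n. real_distribution (\<mu> n)" and L: "real_distribution L"
    and conv: "\<And>u. (\<lambda>n. char (\<mu> n) u) \<longlonglongrightarrow> char L u"
    and r_bounded: "\<And>n. \<bar>r n\<bar> \<le> R"
  shows "(\<lambda>n. char (\<mu> n) (r n) - char L (r n)) \<longlonglongrightarrow> 0"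
proof -
  have weak_conv: "weak_conv_m \<mu> L" by (rule levy_continuity[OF \<mu> L conv])
  obtain \<Omega> :: "real measure" and Y :: "nat \<Rightarrow> real \<Rightarrow> real" and Y\<^sub>L where
    "prob_space \<Omega>" and Y_meas[measurable]: "\<And>n. Y n \<in> measurable \<Omega> borel"
    and distr_Y: "\<And>n. distr \<Omega> borel (Y n) = \<mu> n" and "Y\<^sub>L \<in> measurable \<Omega> lborel"
    and distr_Y\<^sub>L: "distr \<Omega> borel Y\<^sub>L = L"
    and Y_lim: "\<And>x. x \<in> space \<Omega> \<Longrightarrow> (\<lambda>n. Y n x) \<longlonglongrightarrow> Y\<^sub>L x"
    using Skorohod[OF \<mu> L weak_conv] by blast
  interpret prob_space \<Omega> by fact
  have [measurable]: "Y\<^sub>L \<in> borel_measurable \<Omega>" using \<open>Y\<^sub>L \<in> measurable \<Omega> lborel\<close> by simp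
  have char_diff: "char (\<mu> n) (r n) - char L (r n)
      = (CLINT x|\<Omega>. iexp (r n * Y n x) - iexp (r n * Y\<^sub>L x))" for n
  proof -
    have "char (\<mu> n) (r n) = (CLINT x|\<Omega>. iexp (r n * Y n x))"
      unfolding char_def distr_Y[symmetric, of n] by (simp add: integral_distr)
    moreover have "char L (r n) = (CLINT x|\<Omega>. iexp (r n * Y\<^sub>L x))"
      unfolding char_def distr_Y\<^sub>L[symmetric] by (simp add: integral_distr)
    moreover have "integrable \<Omega> (\<lambda>x. iexp (r n * Y n x))" "integrable \<Omega> (\<lambda>x. iexp (r n * Y\<^sub>L x))"
      by (auto intro!: integrable_iexp)
    ultimately show ?thesis by simp
  qed
  have "(\<lambda>n. CLINT x|\<Omega>. iexp (r n * Y n x) - iexp (r n * Y\<^sub>L x)) \<longlonglongrightarrow> (CLINT x|\<Omega>. 0)"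
  proof (rule integral_dominated_convergence[where w="\<lambda>_. 2"])
    show "AE x in \<Omega>. (\<lambda>n. iexp (r n * Y n x) - iexp (r n * Y\<^sub>L x)) \<longlonglongrightarrow> 0"
    proof (rule AE_I2)
      fix x assume x: "x \<in> space \<Omega>"
      have "(\<lambda>n. R * \<bar>Y n x - Y\<^sub>L x\<bar>) \<longlonglongrightarrow> R * \<bar>Y\<^sub>L x - Y\<^sub>L x\<bar>"
        by (intro tendsto_intros Y_lim x)
      then have lim_R: "(\<lambda>n. R * \<bar>Y n x - Y\<^sub>L x\<bar>) \<longlonglongrightarrow> 0" by simp
      have bound: "cmod (iexp (r n * Y n x) - iexp (r n * Y\<^sub>L x)) \<le> R * \<bar>Y n x - Y\<^sub>L x\<bar>" for n
      proof -
        have "cmod (iexp (r n * Y n x) - iexp (r n * Y\<^sub>L x)) \<le> \<bar>r n * Y n x - r n * Y\<^sub>L x\<bar>"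
          by (rule norm_iexp_diff_le)
        also have "\<dots> = \<bar>r n\<bar> * \<bar>Y n x - Y\<^sub>L x\<bar>"
          by (simp add: abs_mult flip: right_diff_distrib)
        also have "\<dots> \<le> R * \<bar>Y n x - Y\<^sub>L x\<bar>" by (rule mult_right_mono[OF r_bounded]) simp
        finally show ?thesis .
      qed
      show "(\<lambda>n. iexp (r n * Y n x) - iexp (r n * Y\<^sub>L x)) \<longlonglongrightarrow> 0"
        by (rule tendsto_0_le[OF lim_R, where K=1]) (use bound in \<open>auto simp del: of_real_mult intro!: always_eventually intro: order_trans[OF _ abs_ge_self]\<close>)
    qed
    show "AE x in \<Omega>. cmod (iexp (r n * Y n x) - iexp (r n * Y\<^sub>L x)) \<le> 2" for n
      by (intro AE_I2 norm_iexp_diff_le_2)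
  qed auto
  then show ?thesis by (simp add: char_diff)
qed

lemma char_conv_uniform_on_bounded:
  fixes \<mu> :: "real \<Rightarrow> real measure" and L :: "real measure" and r :: "real \<Rightarrow> real"
  assumes \<mu>: "\<forall>\<^sub>F t in at_top. real_distribution (\<mu> t)" and L: "real_distribution L"
    and conv: "\<And>u. ((\<lambda>t. char (\<mu> t) u) \<longlongrightarrow> char L u) at_top"
    and r_bounded: "\<And>t. \<bar>r t\<bar> \<le> R"
  shows "((\<lambda>t. char (\<mu> t) (r t) - char L (r t)) \<longlongrightarrow> 0) at_top"
proof (rule tendsto_at_topI_sequentially)
  fix T :: "nat \<Rightarrow> real" assume T: "filterlim T at_top sequentially"
  obtain N where N: "\<And>n. n \<ge> N \<Longrightarrow> real_distribution (\<mu> (T n))"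
    using filterlim_iff[THEN iffD1, OF T, rule_format, OF \<mu>] by (auto simp: eventually_sequentially)
  have "(\<lambda>n. char (\<mu> (T n)) u) \<longlonglongrightarrow> char L u" for u
    using filterlim_compose[OF conv T] by (simp add: o_def)
  then have "(\<lambda>n. char (\<mu> (T (n + N))) (r (T (n + N))) - char L (r (T (n + N)))) \<longlonglongrightarrow> 0"
    by (intro char_conv_uniform_on_bounded_sequentially[where R=R] L r_bounded N LIMSEQ_ignore_initial_segment) simp
  then show "(\<lambda>n. char (\<mu> (T n)) (r (T n)) - char L (r (T n))) \<longlonglongrightarrow> 0"
    by (rule LIMSEQ_offset)
qed

text \<open>A convergence-of-types argument: the characteristic functions of \<open>\<mu> t\<close> are uniformly
  close to that of \<open>L\<close> on \<open>[0, 1]\<close>, where \<open>\<bar>char L\<bar>\<close> is strictly decreasing.\<close>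
lemma min_scale_tendsto_1:
  fixes \<mu> :: "real \<Rightarrow> real measure" and L :: "real measure" and r :: "real \<Rightarrow> real" and s :: real
  assumes \<mu>: "\<forall>\<^sub>F t in at_top. real_distribution (\<mu> t)" and L: "real_distribution L"
    and conv: "\<And>u. ((\<lambda>t. char (\<mu> t) u) \<longlongrightarrow> char L u) at_top"
    and norm_char_L: "\<And>u. cmod (char L u) = exp (- s * u\<^sup>2 / 2)" and s: "s > 0"
    and r_nonneg: "\<And>t. r t \<ge> 0"
    and lim: "((\<lambda>t. cmod (char (\<mu> t) (r t))) \<longlongrightarrow> exp (- s / 2)) at_top"
  shows "((\<lambda>t. min (r t) 1) \<longlongrightarrow> 1) at_top"
proof -
  define w where "w t = min (r t) 1" for t
  have w01: "0 \<le> w t" "w t \<le> 1" for t using r_nonneg[of t] by (auto simp: w_def)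
  have "((\<lambda>t. char (\<mu> t) (w t) - char L (w t)) \<longlongrightarrow> 0) at_top"
    by (rule char_conv_uniform_on_bounded[OF \<mu> L conv, where R=1]) (use w01 in auto)
  then have close: "((\<lambda>t. cmod (char (\<mu> t) (w t)) - cmod (char L (w t))) \<longlongrightarrow> 0) at_top"
    by (rule tendsto_0_le[where K=1]) (auto intro!: always_eventually norm_triangle_ineq3)
  have "((\<lambda>t. if r t \<le> 1 then cmod (char (\<mu> t) (r t)) else cmod (char (\<mu> t) 1))
      \<longlongrightarrow> exp (- s / 2)) at_top"
    using lim tendsto_norm[OF conv[of 1]] norm_char_L[of 1]
    by (intro filterlim_If) (auto intro: tendsto_mono[OF inf_le1])
  then have "((\<lambda>t. cmod (char (\<mu> t) (w t))) \<longlongrightarrow> exp (- s / 2)) at_top"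
    by (rule Lim_transform_eventually) (auto simp: w_def min_def intro!: always_eventually)
  from tendsto_diff[OF this close]
  have "((\<lambda>t. exp (- s * (w t)\<^sup>2 / 2)) \<longlongrightarrow> exp (- s / 2)) at_top"
    by (simp add: norm_char_L)
  then have "((\<lambda>t. ln (exp (- s * (w t)\<^sup>2 / 2))) \<longlongrightarrow> ln (exp (- s / 2))) at_top"
    by (rule tendsto_ln) simp
  then have "((\<lambda>t. (-2 / s) * (- s * (w t)\<^sup>2 / 2)) \<longlongrightarrow> (-2 / s) * (- s / 2)) at_top"
    by (intro tendsto_mult_left) simp
  then have "((\<lambda>t. (w t)\<^sup>2) \<longlongrightarrow> 1) at_top" using s by simp
  then have "((\<lambda>t. sqrt ((w t)\<^sup>2)) \<longlongrightarrow> sqrt 1) at_top" by (rule tendsto_real_sqrt)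
  then show ?thesis using w01 by (simp add: w_def)
qed

lemma scale_ratio_tendsto_1:
  fixes \<mu>1 \<mu>2 :: "real \<Rightarrow> real measure" and L :: "real measure" and \<alpha> \<beta> :: "real \<Rightarrow> real"
    and s :: real
  assumes \<mu>1: "\<forall>\<^sub>F t in at_top. real_distribution (\<mu>1 t)"
    and \<mu>2: "\<forall>\<^sub>F t in at_top. real_distribution (\<mu>2 t)"
    and L: "real_distribution L"
    and conv1: "\<And>u. ((\<lambda>t. char (\<mu>1 t) u) \<longlongrightarrow> char L u) at_top"
    and conv2: "\<And>u. ((\<lambda>t. char (\<mu>2 t) u) \<longlongrightarrow> char L u) at_top"
    and norm_char_L: "\<And>u. cmod (char L u) = exp (- s * u\<^sup>2 / 2)" and s: "s > 0"
    and \<alpha>: "\<And>t. \<alpha> t > 0" and \<beta>: "\<And>t. \<beta> t > 0"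
    and lim1: "((\<lambda>t. cmod (char (\<mu>1 t) (\<beta> t / \<alpha> t))) \<longlongrightarrow> exp (- s / 2)) at_top"
    and lim2: "((\<lambda>t. cmod (char (\<mu>2 t) (\<alpha> t / \<beta> t))) \<longlongrightarrow> exp (- s / 2)) at_top"
  shows "((\<lambda>t. \<beta> t / \<alpha> t) \<longlongrightarrow> 1) at_top"
proof -
  have lower: "((\<lambda>t. min (\<beta> t / \<alpha> t) 1) \<longlongrightarrow> 1) at_top"
    by (rule min_scale_tendsto_1[OF \<mu>1 L conv1 norm_char_L s _ lim1]) (use \<alpha> \<beta> in \<open>auto intro: less_imp_le\<close>)
  have lower': "((\<lambda>t. min (\<alpha> t / \<beta> t) 1) \<longlongrightarrow> 1) at_top"
    by (rule min_scale_tendsto_1[OF \<mu>2 L conv2 norm_char_L s _ lim2]) (use \<alpha> \<beta> in \<open>auto intro: less_imp_le\<close>)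
  have "((\<lambda>t. 1 / min (\<alpha> t / \<beta> t) 1) \<longlongrightarrow> 1) at_top"
    using tendsto_divide[OF tendsto_const lower', of 1] by simp
  moreover have "1 / min (\<alpha> t / \<beta> t) 1 = max (\<beta> t / \<alpha> t) 1" for t
    using \<alpha>[of t] \<beta>[of t] by (auto simp: min_def max_def field_simps)
  ultimately have upper: "((\<lambda>t. max (\<beta> t / \<alpha> t) 1) \<longlongrightarrow> 1) at_top" by simp
  have "((\<lambda>t. min (\<beta> t / \<alpha> t) 1 + max (\<beta> t / \<alpha> t) 1 - 1) \<longlongrightarrow> 1 + 1 - 1) at_top"
    by (intro tendsto_intros lower upper)
  moreover have "min x 1 + max x 1 - 1 = x" for x :: real
    by (simp add: min_def max_def)
  ultimately show ?thesis by simp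
qed

lemma tendsto_1_of_power_lower_bound:
  fixes x y :: "'b \<Rightarrow> real" and n :: "'b \<Rightarrow> nat"
  assumes x01: "\<forall>\<^sub>F t in F. 0 \<le> x t \<and> x t \<le> 1" and le: "\<forall>\<^sub>F t in F. y t \<le> x t ^ n t"
    and y: "(y \<longlongrightarrow> c) F" and c: "c > 0" and n: "filterlim n at_top F"
  shows "(x \<longlongrightarrow> 1) F"
proof (rule tendsto_sandwich[where f="\<lambda>t. (c / 2) powr (1 / real (n t))" and h="\<lambda>_. 1"])
  have "\<forall>\<^sub>F t in F. y t > c / 2" using order_tendstoD(1)[OF y, of "c/2"] c by simp
  moreover have "\<forall>\<^sub>F t in F. n t \<ge> 1" using n by (simp add: filterlim_at_top)
  ultimately show "\<forall>\<^sub>F t in F. (c / 2) powr (1 / real (n t)) \<le> x t"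
    using le x01
  proof eventually_elim
    case (elim t)
    then have xn: "x t ^ n t \<ge> c / 2" by simp
    then have "x t > 0" using elim c by (cases "x t = 0") (auto simp: power_0_left)
    have "(c / 2) powr (1 / real (n t)) \<le> (x t ^ n t) powr (1 / real (n t))"
      by (rule powr_mono2) (use xn c in auto)
    also have "\<dots> = x t"
      using \<open>x t > 0\<close> elim(2) by (simp add: powr_realpow[symmetric] powr_powr)
    finally show ?case .
  qed
  show "\<forall>\<^sub>F t in F. x t \<le> 1" using x01 by (auto elim: eventually_mono)
  have "filterlim (\<lambda>t. real (n t)) at_top F"
    by (rule filterlim_compose[OF filterlim_real_sequentially n])
  then have "((\<lambda>t. 1 / real (n t)) \<longlongrightarrow> 0) F"
    using tendsto_inverse_0_at_top by (simp add: divide_inverse)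
  then have "((\<lambda>t. (c / 2) powr (1 / real (n t))) \<longlongrightarrow> (c / 2) powr 0) F"
    by (intro tendsto_intros) (use c in auto)
  then show "((\<lambda>t. (c / 2) powr (1 / real (n t))) \<longlongrightarrow> 1) F" using c by simp
qed simp

lemma exists_quadratic_form_pos:
  fixes A :: "real ^ 'd ^ 'd"
  assumes sym: "transpose A = A" and psd: "\<forall>z. 0 \<le> z \<bullet> (A *v z)" and nonzero: "A \<noteq> 0"
  obtains z where "z \<bullet> (A *v z) > 0"
proof -
  have "\<exists>z. z \<bullet> (A *v z) > 0"
  proof (rule ccontr)
    assume "\<not> ?thesis"
    then have Q: "z \<bullet> (A *v z) = 0" for z using psd by (metis not_less order.antisym)
    have "y \<bullet> (A *v x) = x \<bullet> (A *v y)" for x y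
      using sym by (metis dot_lmul_matrix inner_commute transpose_transpose vector_transpose_matrix)
    then have "x \<bullet> (A *v y) = 0" for x y
      using Q[of "x + y"] Q[of x] Q[of y]
      by (simp add: matrix_vector_right_distrib inner_add_left inner_add_right)
    then have "A *v y = 0 *v y" for y by (metis inner_eq_zero_iff matrix_vector_mult_0)
    then have "A = 0" by (simp add: matrix_eq)
    with nonzero show False by simp
  qed
  then show ?thesis using that by blast
qed

lemma char_distr_inner:
  fixes N :: "(real ^ 'd) measure"
  assumes "sets N = sets borel"
  shows "char (distr N borel (\<lambda>x. z \<bullet> x)) u = (CLINT x|N. cis ((u *\<^sub>R z) \<bullet> x))"
proof -
  have "(\<lambda>x. z \<bullet> x) \<in> borel_measurable N"
    by (simp add: measurable_cong_sets[OF assms refl])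
  then have "char (distr N borel (\<lambda>x. z \<bullet> x)) u = (CLINT x|N. iexp (u * (z \<bullet> x)))"
    unfolding char_def by (rule integral_distr) (intro borel_measurable_continuous_onI continuous_intros)
  then show ?thesis by (simp add: cis_conv_exp)
qed

lemma norm_char_gaussian_projection:
  fixes A :: "real ^ 'd ^ 'd" and \<nu> :: "(real ^ 'd) measure"
  assumes gauss: "centered_gaussian A \<nu>"
  shows "cmod (char (distr \<nu> borel (\<lambda>x. z \<bullet> x)) u) = exp (- (z \<bullet> (A *v z)) * u\<^sup>2 / 2)"
proof -
  have "char (distr \<nu> borel (\<lambda>x. z \<bullet> x)) u = (CLINT x|\<nu>. cis ((u *\<^sub>R z) \<bullet> x))"
    using gauss by (intro char_distr_inner) (simp add: centered_gaussian_def)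
  also have "\<dots> = complex_of_real (exp (- ((u *\<^sub>R z) \<bullet> (A *v (u *\<^sub>R z))) / 2))"
    using gauss unfolding centered_gaussian_def by (metis minus_divide_left)
  also have "(u *\<^sub>R z) \<bullet> (A *v (u *\<^sub>R z)) = (z \<bullet> (A *v z)) * u\<^sup>2"
    by (simp add: matrix_vector_mult_scaleR power2_eq_square)
  finally show ?thesis by simp
qed

lemma complex_integral_cis_eq:
  fixes N :: "(real ^ 'd) measure"
  assumes "prob_space N" "sets N = sets borel"
  shows "(CLINT x|N. cis (w \<bullet> x)) = Complex (LINT x|N. cos (w \<bullet> x)) (LINT x|N. sin (w \<bullet> x))"
proof -
  interpret prob_space N by fact
  have "(\<lambda>x::real^'d. cis (w \<bullet> x)) \<in> borel_measurable borel"
    by (intro borel_measurable_continuous_onI continuous_intros)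
  then have "(\<lambda>x. cis (w \<bullet> x)) \<in> borel_measurable N"
    by (simp add: measurable_cong_sets[OF assms(2) refl])
  then have "complex_integrable N (\<lambda>x. cis (w \<bullet> x))"
    by (intro integrable_const_bound[where B=1]) simp_all
  then show ?thesis
    using integral_Re[of N "\<lambda>x. cis (w \<bullet> x)"] integral_Im[of N "\<lambda>x. cis (w \<bullet> x)"]
    by (simp add: complex_eq_iff)
qed

lemma weak_conv_filter_char_tendsto:
  fixes \<mu> :: "'b \<Rightarrow> (real ^ 'd) measure" and \<nu> :: "(real ^ 'd) measure"
  assumes conv: "weak_conv_filter \<mu> \<nu> F"
    and \<mu>: "\<forall>\<^sub>F t in F. prob_space (\<mu> t) \<and> sets (\<mu> t) = sets borel"
    and \<nu>: "prob_space \<nu>" "sets \<nu> = sets borel"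
  shows "((\<lambda>t. CLINT x|\<mu> t. cis (w \<bullet> x)) \<longlongrightarrow> (CLINT x|\<nu>. cis (w \<bullet> x))) F"
proof -
  have "continuous_on UNIV (\<lambda>x::real^'d. cos (w \<bullet> x))" "bounded (range (\<lambda>x::real^'d. cos (w \<bullet> x)))"
    "continuous_on UNIV (\<lambda>x::real^'d. sin (w \<bullet> x))" "bounded (range (\<lambda>x::real^'d. sin (w \<bullet> x)))"
    unfolding bounded_iff by (auto intro!: continuous_intros exI[where x=1])
  then have "((\<lambda>t. Complex (LINT x|\<mu> t. cos (w \<bullet> x)) (LINT x|\<mu> t. sin (w \<bullet> x)))
      \<longlongrightarrow> Complex (LINT x|\<nu>. cos (w \<bullet> x)) (LINT x|\<nu>. sin (w \<bullet> x))) F"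
    using conv unfolding weak_conv_filter_def by (intro tendsto_Complex) blast+
  then have "((\<lambda>t. Complex (LINT x|\<mu> t. cos (w \<bullet> x)) (LINT x|\<mu> t. sin (w \<bullet> x)))
      \<longlongrightarrow> (CLINT x|\<nu>. cis (w \<bullet> x))) F"
    by (simp add: complex_integral_cis_eq \<nu>)
  then show ?thesis
    by (rule Lim_transform_eventually) (use \<mu> in \<open>auto elim!: eventually_mono simp: complex_integral_cis_eq\<close>)
qed

lemma char_inner_tendsto_of_weak_conv:
  fixes Z :: "'b \<Rightarrow> 'a \<Rightarrow> real ^ 'd" and \<nu> :: "(real ^ 'd) measure"
  assumes conv: "weak_conv_filter (\<lambda>t. distr M borel (Z t)) \<nu> F" and "prob_space M"
    and Z: "\<forall>\<^sub>F t in F. Z t \<in> borel_measurable M"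
    and \<nu>: "prob_space \<nu>" "sets \<nu> = sets borel"
  shows "((\<lambda>t. char (distr M borel (\<lambda>\<omega>. z \<bullet> Z t \<omega>)) u) \<longlongrightarrow> char (distr \<nu> borel (\<lambda>x. z \<bullet> x)) u) F"
proof -
  have cis_inner [measurable]: "(\<lambda>x::real^'d. cis (w \<bullet> x)) \<in> borel_measurable borel" for w
    by (intro borel_measurable_continuous_onI continuous_intros)
  have "((\<lambda>t. CLINT x|distr M borel (Z t). cis ((u *\<^sub>R z) \<bullet> x)) \<longlongrightarrow> (CLINT x|\<nu>. cis ((u *\<^sub>R z) \<bullet> x))) F"
    using Z \<open>prob_space M\<close>
    by (intro weak_conv_filter_char_tendsto[OF conv] \<nu>) (auto elim!: eventually_mono intro: prob_space.prob_space_distr)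
  moreover have "\<forall>\<^sub>F t in F. (CLINT x|distr M borel (Z t). cis ((u *\<^sub>R z) \<bullet> x))
      = char (distr M borel (\<lambda>\<omega>. z \<bullet> Z t \<omega>)) u"
    using Z by eventually_elim (simp add: char_def integral_distr cis_conv_exp)
  ultimately show ?thesis
    by (simp add: Lim_transform_eventually char_distr_inner \<nu>)
qed

lemma expectation_min_abs_tendsto_0:
  fixes Y :: "real \<Rightarrow> 'a \<Rightarrow> real"
  assumes "prob_space M" and Y[measurable]: "\<And>t. Y t \<in> borel_measurable M"
    and char_lim: "\<And>u. ((\<lambda>t. char (distr M borel (Y t)) u) \<longlongrightarrow> 1) at_top"
  shows "((\<lambda>t. LINT \<omega>|M. min 1 \<bar>Y t \<omega>\<bar>) \<longlongrightarrow> 0) at_top"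
proof (rule tendsto_at_topI_sequentially)
  interpret prob_space M by fact
  fix T :: "nat \<Rightarrow> real" assume T: "filterlim T at_top sequentially"
  define \<delta> where "\<delta> = return borel (0::real)"
  have \<delta>: "real_distribution \<delta>"
    unfolding \<delta>_def real_distribution_def real_distribution_axioms_def by (simp add: prob_space_return)
  have "char \<delta> u = 1" for u
    unfolding \<delta>_def char_def by (subst integral_return) simp_all
  then have "(\<lambda>n. char (distr M borel (Y (T n))) u) \<longlonglongrightarrow> char \<delta> u" for u
    using filterlim_compose[OF char_lim T] by (simp add: o_def)
  then have "weak_conv_m (\<lambda>n. distr M borel (Y (T n))) \<delta>"
    by (intro levy_continuity \<delta>) simp
  then have "(\<lambda>n. LINT x|distr M borel (Y (T n)). min 1 \<bar>x\<bar>) \<longlonglongrightarrow> (LINT x|\<delta>. min 1 \<bar>x\<bar>)"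
    by (intro weak_conv_imp_integral_bdd_continuous_conv[where B=1] \<delta>)
      (auto intro!: continuous_intros)
  moreover have "(LINT x|\<delta>. min 1 \<bar>x\<bar>) = 0"
    unfolding \<delta>_def by (subst integral_return) simp_all
  ultimately show "(\<lambda>n. LINT \<omega>|M. min 1 \<bar>Y (T n) \<omega>\<bar>) \<longlonglongrightarrow> 0"
    by (simp add: integral_distr)
qed

lemma scale_tendsto_0_of_expectation_min_abs:
  fixes W :: "'a \<Rightarrow> real" and b :: "real \<Rightarrow> real"
  assumes "prob_space M" and W[measurable]: "W \<in> borel_measurable M"
    and nondegenerate: "\<not> (AE \<omega> in M. W \<omega> = 0)" and b_nonneg: "\<And>t. b t \<ge> 0"
    and lim: "((\<lambda>t. LINT \<omega>|M. min 1 \<bar>b t * W \<omega>\<bar>) \<longlongrightarrow> 0) at_top"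
  shows "(b \<longlongrightarrow> 0) at_top"
proof (rule tendstoI)
  interpret prob_space M by fact
  fix e :: real assume e: "e > 0"
  define m where "m = (LINT \<omega>|M. min 1 (e * \<bar>W \<omega>\<bar>))"
  have integrable: "integrable M (\<lambda>\<omega>. min 1 (v * \<bar>W \<omega>\<bar>))" if "v \<ge> 0" for v
    by (rule integrable_const_bound[where B=1]) (use that in auto)
  have "m > 0"
  proof -
    have "m \<ge> 0" unfolding m_def by (rule integral_nonneg_AE) (use e in auto)
    moreover have "m \<noteq> 0"
    proof
      assume "m = 0"
      then have "AE \<omega> in M. min 1 (e * \<bar>W \<omega>\<bar>) = 0"
        unfolding m_def using integral_nonneg_eq_0_iff_AE[OF integrable] e by auto
      then have "AE \<omega> in M. W \<omega> = 0"
        by (rule AE_mp) (use e in \<open>auto simp: min_def split: if_splits\<close>)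
      with nondegenerate show False by simp
    qed
    ultimately show ?thesis by simp
  qed
  with lim have "\<forall>\<^sub>F t in at_top. (LINT \<omega>|M. min 1 \<bar>b t * W \<omega>\<bar>) < m"
    by (rule order_tendstoD(2))
  then show "\<forall>\<^sub>F t in at_top. dist (b t) 0 < e"
  proof eventually_elim
    case (elim t)
    show ?case
    proof (rule ccontr)
      assume "\<not> dist (b t) 0 < e"
      then have "e \<le> b t" using b_nonneg[of t] by simp
      then have "m \<le> (LINT \<omega>|M. min 1 \<bar>b t * W \<omega>\<bar>)"
        unfolding m_def using e b_nonneg[of t] integrable[of e] integrable[of "b t"]
        by (intro integral_mono min.mono) (auto simp: abs_mult intro: mult_right_mono)
      with elim show False by simp
    qed
  qed
qed

locale levy_projection =
  fixes M :: "'a measure" and X :: "real \<Rightarrow> 'a \<Rightarrow> real ^ 'd" and z :: "real ^ 'd"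
  assumes levy: "levy_process M X"
begin

sublocale prob_space M
  using levy by (simp add: levy_process_def)

lemma X_measurable [measurable]: "t \<ge> 0 \<Longrightarrow> X t \<in> borel_measurable M"
  using levy by (simp add: levy_process_def)

lemma AE_X_0: "AE \<omega> in M. X 0 \<omega> = 0"
  using levy by (simp add: levy_process_def)

definition proj_char :: "real \<Rightarrow> real \<Rightarrow> complex" where
  "proj_char t v = (CLINT \<omega>|M. iexp (v * (z \<bullet> X t \<omega>)))"

lemma iexp_inner_measurable [measurable]: "(\<lambda>x::real^'d. iexp (v * (z \<bullet> x))) \<in> borel_measurable borel"
  by (intro borel_measurable_continuous_onI continuous_intros)

lemma iexp_inner_integrable:
  "f \<in> borel_measurable M \<Longrightarrow> complex_integrable M (\<lambda>\<omega>. iexp (v * (z \<bullet> f \<omega>)))"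
  by (intro integrable_iexp) (simp_all add: measurable_compose[OF _ iexp_inner_measurable])

lemma integral_iexp_increment:
  assumes "s \<ge> 0" "t \<ge> 0"
  shows "(CLINT \<omega>|M. iexp (v * (z \<bullet> (X (s + t) \<omega> - X s \<omega>)))) = proj_char t v"
proof -
  have [measurable]: "X s \<in> borel_measurable M" "X (s + t) \<in> borel_measurable M"
    using assms by simp_all
  have "(CLINT \<omega>|M. iexp (v * (z \<bullet> (X (s + t) \<omega> - X s \<omega>))))
      = (CLINT x|distr M borel (\<lambda>\<omega>. X (s + t) \<omega> - X s \<omega>). iexp (v * (z \<bullet> x)))"
    by (simp add: integral_distr)
  also have "distr M borel (\<lambda>\<omega>. X (s + t) \<omega> - X s \<omega>) = distr M borel (X t)"
    using levy assms by (simp add: levy_process_def)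
  also have "(CLINT x|distr M borel (X t). iexp (v * (z \<bullet> x))) = proj_char t v"
    unfolding proj_char_def using assms by (simp add: integral_distr)
  finally show ?thesis .
qed

lemma integral_iexp_consecutive_increments:
  assumes "s \<ge> 0" "t \<ge> 0"
  shows "(CLINT \<omega>|M. iexp (v * (z \<bullet> (X s \<omega> - X 0 \<omega>))) * iexp (w * (z \<bullet> (X (s + t) \<omega> - X s \<omega>))))
         = proj_char s v * proj_char t w"
proof -
  define T :: "nat \<Rightarrow> real" where "T i = (if i = 0 then 0 else if i = 1 then s else s + t)" for i
  define Z where "Z = (\<lambda>i \<omega>. X (T (Suc i)) \<omega> - X (T i) \<omega>)"
  define V :: "nat \<Rightarrow> real" where "V i = (if i = 0 then v else w)" for i
  have [measurable]: "X s \<in> borel_measurable M" "X (s + t) \<in> borel_measurable M"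
    using assms by simp_all
  have Z_measurable: "Z i \<in> borel_measurable M" if "i \<in> {..<2}" for i
    using that by (auto simp: Z_def T_def less_2_cases_iff)
  have "0 \<le> T 0" "\<forall>i<2. T i \<le> T (Suc i)" using assms by (auto simp: T_def less_2_cases_iff)
  then have "indep_vars (\<lambda>_. borel) Z {..<2}"
    using levy unfolding levy_process_def Z_def by blast
  then have "indep_vars (\<lambda>_. borel) (\<lambda>i \<omega>. iexp (V i * (z \<bullet> Z i \<omega>))) {..<2}"
    by (rule indep_vars_compose2) simp
  then have "(CLINT \<omega>|M. (\<Prod>i<2. iexp (V i * (z \<bullet> Z i \<omega>)))) = (\<Prod>i<2. CLINT \<omega>|M. iexp (V i * (z \<bullet> Z i \<omega>)))"
    using iexp_inner_integrable[OF Z_measurable] by (rule indep_vars_lebesgue_integral[rotated]) simp_all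
  moreover have "(CLINT \<omega>|M. iexp (V 0 * (z \<bullet> Z 0 \<omega>))) = proj_char s v"
    using integral_iexp_increment[of 0 s v] assms by (simp add: V_def Z_def T_def)
  moreover have "(CLINT \<omega>|M. iexp (V 1 * (z \<bullet> Z 1 \<omega>))) = proj_char t w"
    using integral_iexp_increment[of s t w] assms by (simp add: V_def Z_def T_def)
  ultimately show ?thesis
    by (simp add: numeral_2_eq_2 lessThan_Suc mult.commute V_def Z_def T_def)
qed

lemma proj_char_add:
  assumes "s \<ge> 0" "t \<ge> 0"
  shows "proj_char (s + t) v = proj_char s v * proj_char t v"
proof -
  have [measurable]: "X s \<in> borel_measurable M" "X (s + t) \<in> borel_measurable M"
    using assms by simp_all
  have "proj_char (s + t) v
      = (CLINT \<omega>|M. iexp (v * (z \<bullet> (X s \<omega> - X 0 \<omega>))) * iexp (v * (z \<bullet> (X (s + t) \<omega> - X s \<omega>))))"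
    unfolding proj_char_def
  proof (rule integral_cong_AE)
    show "AE \<omega> in M. iexp (v * (z \<bullet> X (s + t) \<omega>))
        = iexp (v * (z \<bullet> (X s \<omega> - X 0 \<omega>))) * iexp (v * (z \<bullet> (X (s + t) \<omega> - X s \<omega>)))"
      using AE_X_0 by eventually_elim (simp add: inner_diff_right algebra_simps flip: exp_add)
  qed measurable
  also have "\<dots> = proj_char s v * proj_char t v"
    by (rule integral_iexp_consecutive_increments[OF assms])
  finally show ?thesis .
qed

lemma proj_char_0: "proj_char 0 v = 1"
proof -
  have "proj_char 0 v = (CLINT \<omega>|M. 1)"
    unfolding proj_char_def by (rule integral_cong_AE) (use AE_X_0 in auto)
  then show ?thesis by (simp add: prob_space)
qed

lemma norm_proj_char_le_1: "cmod (proj_char t v) \<le> 1"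
proof -
  have "cmod (proj_char t v) \<le> (LINT \<omega>|M. cmod (iexp (v * (z \<bullet> X t \<omega>))))"
    unfolding proj_char_def by (rule integral_norm_bound)
  also have "\<dots> = 1" by (simp add: prob_space del: of_real_mult)
  finally show ?thesis .
qed

lemma norm_proj_char_antimono:
  assumes "0 \<le> s" "s \<le> t"
  shows "cmod (proj_char t v) \<le> cmod (proj_char s v)"
proof -
  have "cmod (proj_char t v) = cmod (proj_char s v) * cmod (proj_char (t - s) v)"
    using proj_char_add[of s "t - s" v] assms by (simp add: norm_mult)
  also have "\<dots> \<le> cmod (proj_char s v)"
    using norm_proj_char_le_1[of "t - s" v] by (simp add: mult_left_le)
  finally show ?thesis .
qed

lemma norm_proj_char_mult_time:
  assumes "\<delta> \<ge> 0"
  shows "cmod (proj_char (real n * \<delta>) v) = cmod (proj_char \<delta> v) ^ n"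
proof (induction n)
  case (Suc n)
  then show ?case
    using proj_char_add[of "real n * \<delta>" \<delta> v] assms by (simp add: algebra_simps norm_mult)
qed (simp add: proj_char_0)

lemma norm_proj_char_le_power:
  assumes "\<delta> \<ge> 0" "real n * \<delta> \<le> t"
  shows "cmod (proj_char t v) \<le> cmod (proj_char \<delta> v) ^ n"
  using norm_proj_char_antimono[of "real n * \<delta>" t v] norm_proj_char_mult_time[of \<delta> n v] assms
  by simp

lemma norm_proj_char_eq_1:
  assumes "\<forall>u. cmod (proj_char 1 u) = 1" "t \<ge> 0"
  shows "cmod (proj_char t v) = 1"
  using norm_proj_char_antimono[of t "real (nat \<lceil>t\<rceil>) * 1" v]
    norm_proj_char_mult_time[of 1 "nat \<lceil>t\<rceil>" v] norm_proj_char_le_1[of t v] assms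
  by simp

lemma norm_proj_char_step_tendsto_1:
  fixes G :: "'b filter"
  assumes lim: "((\<lambda>t. cmod (proj_char (\<sigma> t) (v t))) \<longlongrightarrow> c) G" and "c > 0"
    and n: "filterlim n at_top G"
    and times: "\<forall>\<^sub>F t in G. 0 \<le> \<delta> t \<and> real (n t) * \<delta> t \<le> \<sigma> t"
  shows "((\<lambda>t. cmod (proj_char (\<delta> t) (v t))) \<longlongrightarrow> 1) G"
proof (rule tendsto_1_of_power_lower_bound[OF _ _ lim \<open>c > 0\<close> n])
  show "\<forall>\<^sub>F t in G. 0 \<le> cmod (proj_char (\<delta> t) (v t)) \<and> cmod (proj_char (\<delta> t) (v t)) \<le> 1"
    by (simp add: norm_proj_char_le_1)
  show "\<forall>\<^sub>F t in G. cmod (proj_char (\<sigma> t) (v t)) \<le> cmod (proj_char (\<delta> t) (v t)) ^ n t"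
    using times by eventually_elim (auto intro!: norm_proj_char_le_power)
qed

definition symmetrized_increment :: "'a \<Rightarrow> real" where
  "symmetrized_increment \<omega> = z \<bullet> (X 2 \<omega> - X 1 \<omega>) - z \<bullet> (X 1 \<omega> - X 0 \<omega>)"

lemma symmetrized_increment_measurable [measurable]: "symmetrized_increment \<in> borel_measurable M"
  unfolding symmetrized_increment_def by measurable

lemma char_symmetrized_increment:
  "char (distr M borel (\<lambda>\<omega>. v * symmetrized_increment \<omega>)) u = complex_of_real ((cmod (proj_char 1 (u * v)))\<^sup>2)"
proof -
  have "cnj (proj_char 1 (u * v)) = (CLINT \<omega>|M. cnj (iexp (u * v * (z \<bullet> X 1 \<omega>))))"
    unfolding proj_char_def by simp
  also have "\<dots> = proj_char 1 (- (u * v))"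
    unfolding proj_char_def by (rule Bochner_Integration.integral_cong) (simp_all add: exp_cnj)
  finally have conj: "proj_char 1 (- (u * v)) = cnj (proj_char 1 (u * v))" ..
  have "char (distr M borel (\<lambda>\<omega>. v * symmetrized_increment \<omega>)) u
      = (CLINT \<omega>|M. iexp (u * (v * symmetrized_increment \<omega>)))"
    unfolding char_def by (rule integral_distr) measurable
  also have "\<dots> = (CLINT \<omega>|M. iexp (- (u * v) * (z \<bullet> (X 1 \<omega> - X 0 \<omega>)))
      * iexp (u * v * (z \<bullet> (X (1 + 1) \<omega> - X 1 \<omega>))))"
    unfolding symmetrized_increment_def
    by (rule Bochner_Integration.integral_cong) (simp_all add: algebra_simps flip: exp_add)
  also have "\<dots> = cnj (proj_char 1 (u * v)) * proj_char 1 (u * v)"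
    unfolding conj[symmetric] by (rule integral_iexp_consecutive_increments) simp_all
  finally show ?thesis by (metis complex_norm_square mult.commute)
qed

lemma scale_tendsto_0_or_norm_proj_char_1:
  fixes b :: "real \<Rightarrow> real"
  assumes b_pos: "\<And>t. b t > 0"
    and lim: "\<And>u. ((\<lambda>t. cmod (proj_char 1 (b t * u))) \<longlongrightarrow> 1) at_top"
  shows "(b \<longlongrightarrow> 0) at_top \<or> (\<forall>u. cmod (proj_char 1 u) = 1)"
proof (cases "AE \<omega> in M. symmetrized_increment \<omega> = 0")
  case True
  have "cmod (proj_char 1 u) = 1" for u
  proof -
    have "char (distr M borel (\<lambda>\<omega>. 1 * symmetrized_increment \<omega>)) u
        = (CLINT \<omega>|M. iexp (u * (1 * symmetrized_increment \<omega>)))"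
      unfolding char_def by (rule integral_distr) measurable
    also have "\<dots> = (CLINT \<omega>|M. 1)"
    proof (rule integral_cong_AE)
      show "AE \<omega> in M. iexp (u * (1 * symmetrized_increment \<omega>)) = 1"
        using True by eventually_elim simp
    qed measurable
    finally have "char (distr M borel (\<lambda>\<omega>. 1 * symmetrized_increment \<omega>)) u = 1"
      by (simp add: prob_space)
    then have "(cmod (proj_char 1 u))\<^sup>2 = 1"
      using char_symmetrized_increment[of 1 u] by (simp del: of_real_power add: of_real_eq_1_iff)
    then show ?thesis using norm_ge_zero[of "proj_char 1 u"] by (auto simp: power2_eq_1_iff)
  qed
  then show ?thesis by simp
next
  case False
  have "((\<lambda>t. char (distr M borel (\<lambda>\<omega>. b t * symmetrized_increment \<omega>)) u) \<longlongrightarrow> 1) at_top" for u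
    using tendsto_of_real[OF tendsto_power[OF lim[of u], of 2]]
    by (simp add: char_symmetrized_increment mult.commute)
  then have "((\<lambda>t. LINT \<omega>|M. min 1 \<bar>b t * symmetrized_increment \<omega>\<bar>) \<longlongrightarrow> 0) at_top"
    by (intro expectation_min_abs_tendsto_0) (simp_all add: prob_space_axioms)
  then have "(b \<longlongrightarrow> 0) at_top"
    by (rule scale_tendsto_0_of_expectation_min_abs[OF prob_space_axioms symmetrized_increment_measurable False, rotated])
      (simp_all add: less_imp_le b_pos)
  then show ?thesis ..
qed

lemma prob_far_from_X_0_tendsto_0:
  assumes "\<epsilon> > 0"
  shows "((\<lambda>t. prob {\<omega> \<in> space M. \<epsilon> < dist (X t \<omega>) (X 0 \<omega>)}) \<longlongrightarrow> 0) (at_right 0)"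
proof -
  have "((\<lambda>t. prob {\<omega> \<in> space M. \<epsilon> < dist (X t \<omega>) (X 0 \<omega>)}) \<longlongrightarrow> 0) (at 0 within {0..})"
    using levy assms unfolding levy_process_def by auto
  then show ?thesis by (rule tendsto_within_subset) auto
qed

text \<open>On the event \<open>dist (X t) (X 0) \<le> \<delta>\<close> the integrand is at most \<open>C * \<delta>\<close>, and that event
  has probability close to \<open>1\<close> by stochastic continuity.\<close>
lemma expectation_min_norm_tendsto_0:
  assumes C: "C \<ge> 0"
  shows "((\<lambda>t. LINT \<omega>|M. min 2 (C * norm (X t \<omega>))) \<longlongrightarrow> 0) (at_right 0)"
proof (rule tendstoI)
  fix e :: real assume e: "e > 0"
  define \<delta> where "\<delta> = e / (4 * (C + 1))"
  have \<delta>: "\<delta> > 0" using e C by (simp add: \<delta>_def)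
  have "C * \<delta> = e / 4 * (C / (C + 1))" using C by (simp add: \<delta>_def field_simps)
  also have "\<dots> \<le> e / 4 * 1" using C e by (intro mult_left_mono) auto
  finally have C\<delta>: "C * \<delta> < e / 2" using e by simp
  have "\<forall>\<^sub>F t in at_right 0. prob {\<omega> \<in> space M. \<delta> < dist (X t \<omega>) (X 0 \<omega>)} < e / 4"
    using prob_far_from_X_0_tendsto_0[OF \<delta>] e by (auto dest: order_tendstoD(2)[where a="e/4"])
  then show "\<forall>\<^sub>F t in at_right 0. dist (LINT \<omega>|M. min 2 (C * norm (X t \<omega>))) 0 < e"
    using eventually_at_right_less[of 0]
  proof eventually_elim
    case (elim t)
    have [measurable]: "X t \<in> borel_measurable M" "X 0 \<in> borel_measurable M"
      using elim by simp_all
    define S where "S = {\<omega> \<in> space M. \<delta> < dist (X t \<omega>) (X 0 \<omega>)}"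
    have S[measurable]: "S \<in> sets M" unfolding S_def by measurable
    have bound: "AE \<omega> in M. min 2 (C * norm (X t \<omega>)) \<le> C * \<delta> + 2 * indicator S \<omega>"
      using AE_X_0 AE_space
    proof eventually_elim
      case (elim \<omega>)
      show ?case
      proof (cases "\<omega> \<in> S")
        case False
        then have "norm (X t \<omega>) \<le> \<delta>" using elim by (simp add: S_def dist_norm)
        then show ?thesis using C False by (simp add: min.coboundedI2 mult_left_mono)
      qed (use mult_nonneg_nonneg[of C \<delta>] C \<delta> in \<open>auto intro!: min.coboundedI1\<close>)
    qed
    have "0 \<le> (LINT \<omega>|M. min 2 (C * norm (X t \<omega>)))"
      by (rule integral_nonneg_AE) (use C in auto)
    moreover have "(LINT \<omega>|M. min 2 (C * norm (X t \<omega>))) \<le> (LINT \<omega>|M. C * \<delta> + 2 * indicator S \<omega>)"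
    proof (rule integral_mono_AE[OF _ _ bound])
      show "integrable M (\<lambda>\<omega>. min 2 (C * norm (X t \<omega>)))"
        by (rule integrable_const_bound[where B=2]) (use C in auto)
      show "integrable M (\<lambda>\<omega>. C * \<delta> + 2 * indicator S \<omega>)"
        by (auto simp: integrable_indicator_iff less_top[symmetric])
    qed
    moreover have "(LINT \<omega>|M. C * \<delta> + 2 * indicator S \<omega>) = C * \<delta> + 2 * prob S"
      by (subst Bochner_Integration.integral_add)
        (auto simp: prob_space integrable_indicator_iff less_top[symmetric])
    ultimately show ?case using C\<delta> elim(1) by (simp add: S_def)
  qed
qed

lemma proj_char_tendsto_1_at_0:
  assumes bounded: "\<And>t. \<bar>b t\<bar> \<le> K"
  shows "((\<lambda>t. proj_char t (b t)) \<longlongrightarrow> 1) (at_right 0)"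
proof -
  have K: "K \<ge> 0" using bounded[of 0] by simp
  have "\<forall>\<^sub>F t in at_right 0.
      norm (proj_char t (b t) - 1) \<le> norm (LINT \<omega>|M. min 2 (K * norm z * norm (X t \<omega>))) * 1"
    using eventually_at_right_less[of 0]
  proof eventually_elim
    case (elim t)
    have [measurable]: "X t \<in> borel_measurable M" using elim by simp
    have integrable: "integrable M (\<lambda>\<omega>. iexp (b t * (z \<bullet> X t \<omega>)))"
      by (rule iexp_inner_integrable) simp
    have pointwise: "norm (iexp (b t * (z \<bullet> X t \<omega>)) - 1) \<le> min 2 (K * norm z * norm (X t \<omega>))" for \<omega>
    proof -
      have "norm (iexp (b t * (z \<bullet> X t \<omega>)) - 1) \<le> 2"
        using norm_iexp_diff_le_2[of "b t * (z \<bullet> X t \<omega>)" 0] by simp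
      moreover have "norm (iexp (b t * (z \<bullet> X t \<omega>)) - 1) \<le> \<bar>b t\<bar> * \<bar>z \<bullet> X t \<omega>\<bar>"
        using norm_iexp_diff_le[of "b t * (z \<bullet> X t \<omega>)" 0] by (simp add: abs_mult)
      moreover have "\<bar>b t\<bar> * \<bar>z \<bullet> X t \<omega>\<bar> \<le> K * (norm z * norm (X t \<omega>))"
        by (intro mult_mono bounded Cauchy_Schwarz_ineq2) (use K in auto)
      ultimately show ?thesis by (simp add: mult.assoc del: of_real_mult)
    qed
    have "proj_char t (b t) - 1 = (CLINT \<omega>|M. iexp (b t * (z \<bullet> X t \<omega>)) - 1)"
      unfolding proj_char_def using integrable by (simp add: prob_space)
    also have "norm \<dots> \<le> (LINT \<omega>|M. norm (iexp (b t * (z \<bullet> X t \<omega>)) - 1))"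
      by (rule integral_norm_bound)
    also have "\<dots> \<le> LINT \<omega>|M. min 2 (K * norm z * norm (X t \<omega>))"
      using integrable pointwise
      by (intro integral_mono integrable_const_bound[where B=2]) (auto simp: K)
    finally show ?case by simp
  qed
  moreover have "((\<lambda>t. LINT \<omega>|M. min 2 (K * norm z * norm (X t \<omega>))) \<longlongrightarrow> 0) (at_right 0)"
    by (rule expectation_min_norm_tendsto_0) (use K in simp)
  ultimately have "((\<lambda>t. proj_char t (b t) - 1) \<longlongrightarrow> 0) (at_right 0)"
    by (rule tendsto_0_le[rotated])
  then show ?thesis by (simp add: LIM_zero_iff)
qed

lemma real_distribution_affine_law:
  "t \<ge> 0 \<Longrightarrow> real_distribution (distr M borel (\<lambda>\<omega>. a * (z \<bullet> X t \<omega>) - c))"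
  by (intro real_distribution_distr) measurable

lemma norm_char_affine_law:
  assumes "t \<ge> 0"
  shows "cmod (char (distr M borel (\<lambda>\<omega>. a * (z \<bullet> X t \<omega>) - c)) u) = cmod (proj_char t (a * u))"
proof -
  have [measurable]: "X t \<in> borel_measurable M" using assms by simp
  have "char (distr M borel (\<lambda>\<omega>. a * (z \<bullet> X t \<omega>) - c)) u = (CLINT \<omega>|M. iexp (u * (a * (z \<bullet> X t \<omega>) - c)))"
    unfolding char_def by (rule integral_distr) measurable
  also have "\<dots> = (CLINT \<omega>|M. iexp (- (u * c)) * iexp (a * u * (z \<bullet> X t \<omega>)))"
    by (rule Bochner_Integration.integral_cong) (simp_all add: algebra_simps flip: exp_add)
  also have "\<dots> = iexp (- (u * c)) * proj_char t (a * u)"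
    unfolding proj_char_def by (rule integral_mult_right_zero)
  finally show ?thesis by (simp add: norm_mult del: of_real_mult)
qed

end

locale levy_projection_convergence = levy_projection M X z
  for M :: "'a measure" and X :: "real \<Rightarrow> 'a \<Rightarrow> real ^ 'd" and z :: "real ^ 'd" +
  fixes a c :: "real \<Rightarrow> real" and L :: "real measure" and s :: real and F :: "real filter"
  assumes a_pos: "\<And>t. 0 < a t"
    and L: "real_distribution L"
    and norm_char_L: "\<And>u. cmod (char L u) = exp (- s * u\<^sup>2 / 2)"
    and s_pos: "0 < s"
    and char_conv: "\<And>u. ((\<lambda>t. char (distr M borel (\<lambda>\<omega>. a t * (z \<bullet> X t \<omega>) - c t)) u) \<longlongrightarrow> char L u) F"
    and F_pos: "\<forall>\<^sub>F t in F. 0 < t"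
begin

abbreviation law :: "real \<Rightarrow> real measure" where
  "law t \<equiv> distr M borel (\<lambda>\<omega>. a t * (z \<bullet> X t \<omega>) - c t)"

lemma norm_proj_char_scaled_tendsto: "((\<lambda>t. cmod (proj_char t (a t * u))) \<longlongrightarrow> exp (- s * u\<^sup>2 / 2)) F"
proof -
  have "((\<lambda>t. cmod (char (law t) u)) \<longlongrightarrow> exp (- s * u\<^sup>2 / 2)) F"
    using tendsto_norm[OF char_conv[of u]] by (simp add: norm_char_L)
  then show ?thesis
    by (rule Lim_transform_eventually) (use F_pos in \<open>auto elim!: eventually_mono simp: norm_char_affine_law\<close>)
qed

lemma scale_ratio_tendsto_1_along:
  fixes \<tau> \<tau>' \<delta> :: "real \<Rightarrow> real" and n :: "real \<Rightarrow> nat"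
  assumes \<tau>: "filterlim \<tau> F at_top" and \<tau>': "filterlim \<tau>' F at_top"
    and n: "filterlim n at_top at_top"
    and times: "\<forall>\<^sub>F t in at_top. 0 \<le> \<delta> t \<and> \<tau>' t = \<tau> t + \<delta> t \<and> real (n t) * \<delta> t \<le> \<tau> t"
  shows "((\<lambda>t. a (\<tau>' t) / a (\<tau> t)) \<longlongrightarrow> 1) at_top"
proof -
  let ?N = "\<lambda>t v. cmod (proj_char t v)"
  have \<tau>_nonneg: "\<forall>\<^sub>F t in at_top. 0 \<le> \<tau> t"
    using times by eventually_elim (metis of_nat_0_le_iff order_trans zero_le_mult_iff)
  have \<tau>'_nonneg: "\<forall>\<^sub>F t in at_top. 0 \<le> \<tau>' t"
    using times \<tau>_nonneg by eventually_elim simp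
  have lim: "((\<lambda>t. ?N (\<sigma> t) (a (\<sigma> t))) \<longlongrightarrow> exp (- s / 2)) at_top" if "filterlim \<sigma> F at_top" for \<sigma>
    using filterlim_compose[OF norm_proj_char_scaled_tendsto[of 1] that] by (simp add: o_def)
  have step_\<tau>: "((\<lambda>t. ?N (\<delta> t) (a (\<tau> t))) \<longlongrightarrow> 1) at_top"
    by (rule norm_proj_char_step_tendsto_1[OF lim[OF \<tau>] exp_gt_zero n]) (use times in \<open>auto elim: eventually_mono\<close>)
  have step_\<tau>': "((\<lambda>t. ?N (\<delta> t) (a (\<tau>' t))) \<longlongrightarrow> 1) at_top"
    by (rule norm_proj_char_step_tendsto_1[OF lim[OF \<tau>'] exp_gt_zero n]) (use times in \<open>auto elim: eventually_mono\<close>)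
  have split: "\<forall>\<^sub>F t in at_top. \<forall>v. ?N (\<tau>' t) v = ?N (\<tau> t) v * ?N (\<delta> t) v"
    using times \<tau>_nonneg by eventually_elim (simp add: proj_char_add norm_mult)
  have norm_char_law: "\<forall>\<^sub>F t in at_top. cmod (char (law (\<sigma> t)) (a (\<rho> t) / a (\<sigma> t))) = ?N (\<sigma> t) (a (\<rho> t))"
    if "\<forall>\<^sub>F t in at_top. 0 \<le> \<sigma> t" for \<sigma> \<rho>
    using that by eventually_elim (simp add: norm_char_affine_law a_pos[THEN less_imp_neq, symmetric])
  show ?thesis
  proof (rule scale_ratio_tendsto_1[OF _ _ L _ _ norm_char_L s_pos a_pos a_pos])
    show "\<forall>\<^sub>F t in at_top. real_distribution (law (\<tau> t))" "\<forall>\<^sub>F t in at_top. real_distribution (law (\<tau>' t))"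
      using \<tau>_nonneg \<tau>'_nonneg by (auto elim: eventually_mono intro: real_distribution_affine_law)
    show "((\<lambda>t. char (law (\<tau> t)) u) \<longlongrightarrow> char L u) at_top"
      "((\<lambda>t. char (law (\<tau>' t)) u) \<longlongrightarrow> char L u) at_top" for u
      using filterlim_compose[OF char_conv \<tau>] filterlim_compose[OF char_conv \<tau>'] by (simp_all add: o_def)
    have "((\<lambda>t. ?N (\<tau>' t) (a (\<tau>' t)) / ?N (\<delta> t) (a (\<tau>' t))) \<longlongrightarrow> exp (- s / 2) / 1) at_top"
      by (intro tendsto_divide lim \<tau>' step_\<tau>') simp
    moreover have "\<forall>\<^sub>F t in at_top. ?N (\<tau>' t) (a (\<tau>' t)) / ?N (\<delta> t) (a (\<tau>' t))
        = cmod (char (law (\<tau> t)) (a (\<tau>' t) / a (\<tau> t)))"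
      using split norm_char_law[OF \<tau>_nonneg, of \<tau>'] order_tendstoD(1)[OF step_\<tau>', of "1/2", simplified]
      by eventually_elim auto
    ultimately show "((\<lambda>t. cmod (char (law (\<tau> t)) (a (\<tau>' t) / a (\<tau> t)))) \<longlongrightarrow> exp (- s / 2)) at_top"
      by (simp add: Lim_transform_eventually)
    have "((\<lambda>t. ?N (\<tau> t) (a (\<tau> t)) * ?N (\<delta> t) (a (\<tau> t))) \<longlongrightarrow> exp (- s / 2) * 1) at_top"
      by (intro tendsto_mult lim \<tau> step_\<tau>)
    moreover have "\<forall>\<^sub>F t in at_top. ?N (\<tau> t) (a (\<tau> t)) * ?N (\<delta> t) (a (\<tau> t))
        = cmod (char (law (\<tau>' t)) (a (\<tau> t) / a (\<tau>' t)))"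
      using split norm_char_law[OF \<tau>'_nonneg, of \<tau>] by eventually_elim auto
    ultimately show "((\<lambda>t. cmod (char (law (\<tau>' t)) (a (\<tau> t) / a (\<tau>' t)))) \<longlongrightarrow> exp (- s / 2)) at_top"
      by (simp add: Lim_transform_eventually)
  qed
qed

lemma scale_tendsto_top_at_0:
  assumes "F = at_right 0"
  shows "filterlim a at_top (at_right 0)"
  unfolding filterlim_at_top
proof
  fix K\<^sub>0 :: real
  define K where "K = max K\<^sub>0 1"
  define b where "b t = min (a t) K" for t
  have "((\<lambda>t. proj_char t (b t)) \<longlongrightarrow> 1) (at_right 0)"
    by (rule proj_char_tendsto_1_at_0[where K=K]) (auto simp: b_def K_def min_def max_def abs_of_pos a_pos)
  then have lim_b: "((\<lambda>t. cmod (proj_char t (b t))) \<longlongrightarrow> 1) (at_right 0)"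
    using tendsto_norm by fastforce
  have lim_a: "((\<lambda>t. cmod (proj_char t (a t))) \<longlongrightarrow> exp (- s / 2)) (at_right 0)"
    using norm_proj_char_scaled_tendsto[of 1] assms by simp
  define m where "m = (1 + exp (- s / 2)) / 2"
  have "exp (- s / 2) < m" "m < 1" using s_pos by (auto simp: m_def)
  show "\<forall>\<^sub>F t in at_right 0. K\<^sub>0 \<le> a t"
    using order_tendstoD(1)[OF lim_b \<open>m < 1\<close>] order_tendstoD(2)[OF lim_a \<open>exp (- s / 2) < m\<close>]
  proof eventually_elim
    case (elim t)
    then have "b t \<noteq> a t" by auto
    then show ?case by (auto simp: b_def K_def min_def split: if_splits)
  qed
qed

lemma scale_tendsto_0_at_top:
  assumes "F = at_top"
  shows "(a \<longlongrightarrow> 0) at_top"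
proof -
  have lim: "((\<lambda>t. cmod (proj_char t (a t * u))) \<longlongrightarrow> exp (- s * u\<^sup>2 / 2)) at_top" for u
    using norm_proj_char_scaled_tendsto assms by simp
  have "filterlim (\<lambda>t::real. nat \<lfloor>t\<rfloor>) at_top at_top" by real_asymp
  then have "((\<lambda>t. cmod (proj_char 1 (a t * u))) \<longlongrightarrow> 1) at_top" for u
    by (rule norm_proj_char_step_tendsto_1[OF lim exp_gt_zero])
      (simp add: eventually_mono[OF eventually_ge_at_top of_nat_floor])
  then have "(a \<longlongrightarrow> 0) at_top \<or> (\<forall>u. cmod (proj_char 1 u) = 1)"
    by (rule scale_tendsto_0_or_norm_proj_char_1[OF a_pos])
  moreover have "\<not> (\<forall>u. cmod (proj_char 1 u) = 1)"
  proof
    assume unimodular: "\<forall>u. cmod (proj_char 1 u) = 1"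
    have "\<forall>\<^sub>F t in at_top. 1 = cmod (proj_char t (a t * 1))"
      using eventually_ge_at_top[of "0::real"] by eventually_elim (simp add: norm_proj_char_eq_1[OF unimodular])
    then have "((\<lambda>t. cmod (proj_char t (a t * 1))) \<longlongrightarrow> 1) at_top"
      by (rule Lim_transform_eventually[OF tendsto_const])
    with lim[of 1] have "exp (- s * 1\<^sup>2 / 2) = 1"
      by (rule tendsto_unique[OF trivial_limit_at_top_linorder])
    with s_pos show False by simp
  qed
  ultimately show ?thesis by blast
qed

lemma scale_asymp_equiv_at_0:
  assumes "F = at_right 0"
  shows "(\<lambda>t. a (1 / t)) \<sim>[at_top] (\<lambda>t. a (1 / (t + 1)))"
proof -
  have "((\<lambda>t. a (1 / t) / a (1 / (t + 1))) \<longlongrightarrow> 1) at_top"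
  proof (rule scale_ratio_tendsto_1_along[where \<delta>="\<lambda>t. 1 / (t * (t + 1))" and n="\<lambda>t. nat \<lfloor>t\<rfloor>"])
    show "filterlim (\<lambda>t::real. 1 / (t + 1)) F at_top" "filterlim (\<lambda>t::real. 1 / t) F at_top"
      unfolding assms by real_asymp+
    show "filterlim (\<lambda>t::real. nat \<lfloor>t\<rfloor>) at_top at_top" by real_asymp
    show "\<forall>\<^sub>F t in at_top. 0 \<le> 1 / (t * (t + 1)) \<and> 1 / t = 1 / (t + 1) + 1 / (t * (t + 1))
        \<and> real (nat \<lfloor>t\<rfloor>) * (1 / (t * (t + 1))) \<le> 1 / (t + 1)"
      using eventually_ge_at_top[of "1::real"]
    proof eventually_elim
      case (elim t)
      have "real (nat \<lfloor>t\<rfloor>) * (1 / (t * (t + 1))) \<le> t * (1 / (t * (t + 1)))"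
        by (rule mult_right_mono) (use elim in linarith, use elim in simp)
      also have "\<dots> = 1 / (t + 1)"
        using elim by simp
      finally have le: "real (nat \<lfloor>t\<rfloor>) * (1 / (t * (t + 1))) \<le> 1 / (t + 1)" .
      have "1 / (t + 1) + 1 / (t * (t + 1)) = (t + 1) / (t * (t + 1))"
        using elim by (simp add: add_divide_distrib[symmetric] divide_simps)
      then have eq: "1 / t = 1 / (t + 1) + 1 / (t * (t + 1))"
        using elim by simp
      show ?case by (intro conjI le eq) (use elim in simp)
    qed
  qed
  then show ?thesis by (rule asymp_equivI')
qed

lemma scale_asymp_equiv_at_top:
  assumes "F = at_top"
  shows "a \<sim>[at_top] (\<lambda>t. a (t + 1))"
proof -
  have "((\<lambda>t. a (t + 1) / a t) \<longlongrightarrow> 1) at_top"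
  proof (rule scale_ratio_tendsto_1_along[where \<delta>="\<lambda>_. 1" and n="\<lambda>t. nat \<lfloor>t\<rfloor>"])
    show "filterlim (\<lambda>t::real. t) F at_top" "filterlim (\<lambda>t::real. t + 1) F at_top"
      unfolding assms by real_asymp+
    show "filterlim (\<lambda>t::real. nat \<lfloor>t\<rfloor>) at_top at_top" by real_asymp
    show "\<forall>\<^sub>F t in at_top. 0 \<le> (1::real) \<and> t + 1 = t + 1 \<and> real (nat \<lfloor>t\<rfloor>) * 1 \<le> t"
      using eventually_ge_at_top[of "0::real"] by eventually_elim linarith
  qed
  then have "(\<lambda>t. a (t + 1)) \<sim>[at_top] a" by (rule asymp_equivI')
  then show ?thesis by (simp add: asymp_equiv_sym)
qed

end


lemma levy_projection_convergenceI:
  fixes \<nu> :: "(real ^ 'd) measure" and \<xi> :: "real \<Rightarrow> real ^ 'd"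
  assumes levy: "levy_process M X" and gauss: "centered_gaussian A \<nu>"
    and z: "0 < z \<bullet> (A *v z)" and a_pos: "\<forall>t>0. a t > 0" and F_pos: "\<forall>\<^sub>F t in F. 0 < t"
    and conv: "weak_conv_filter (\<lambda>t. distr M borel (\<lambda>\<omega>. a t *\<^sub>R X t \<omega> - \<xi> t)) \<nu> F"
  shows "levy_projection_convergence M X z (\<lambda>t. if 0 < t then a t else 1) (\<lambda>t. z \<bullet> \<xi> t)
    (distr \<nu> borel (\<lambda>x. z \<bullet> x)) (z \<bullet> (A *v z)) F"
proof -
  define a' where "a' t = (if 0 < t then a t else 1)" for t
  have M: "prob_space M" and X: "\<And>t. t \<ge> 0 \<Longrightarrow> X t \<in> borel_measurable M"
    using levy by (simp_all add: levy_process_def)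
  have \<nu>: "prob_space \<nu>" "sets \<nu> = sets borel" using gauss by (simp_all add: centered_gaussian_def)
  have "\<forall>\<^sub>F t in F. (\<lambda>\<omega>. a t *\<^sub>R X t \<omega> - \<xi> t) \<in> borel_measurable M"
    using F_pos
  proof eventually_elim
    case (elim t)
    then have [measurable]: "X t \<in> borel_measurable M" by (simp add: X)
    show ?case by measurable
  qed
  then have conv_proj: "((\<lambda>t. char (distr M borel (\<lambda>\<omega>. z \<bullet> (a t *\<^sub>R X t \<omega> - \<xi> t))) u)
      \<longlongrightarrow> char (distr \<nu> borel (\<lambda>x. z \<bullet> x)) u) F" for u
    by (rule char_inner_tendsto_of_weak_conv[OF conv M _ \<nu>])
  have proj_eq: "\<forall>\<^sub>F t in F. (\<lambda>\<omega>. z \<bullet> (a t *\<^sub>R X t \<omega> - \<xi> t)) = (\<lambda>\<omega>. a' t * (z \<bullet> X t \<omega>) - z \<bullet> \<xi> t)"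
    using F_pos by eventually_elim (simp add: a'_def inner_diff_right)
  have char_conv: "((\<lambda>t. char (distr M borel (\<lambda>\<omega>. a' t * (z \<bullet> X t \<omega>) - z \<bullet> \<xi> t)) u)
      \<longlongrightarrow> char (distr \<nu> borel (\<lambda>x. z \<bullet> x)) u) F" for u
    using conv_proj by (rule Lim_transform_eventually) (use proj_eq in \<open>auto elim: eventually_mono\<close>)
  have "(\<lambda>x. z \<bullet> x) \<in> borel_measurable \<nu>"
    by (simp add: measurable_cong_sets[OF \<nu>(2) refl])
  then have "real_distribution (distr \<nu> borel (\<lambda>x. z \<bullet> x))"
    by (rule prob_space.real_distribution_distr[OF \<nu>(1)])
  with levy z a_pos F_pos char_conv norm_char_gaussian_projection[OF gauss] show ?thesis
    unfolding a'_def[abs_def]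
    by (intro levy_projection_convergence.intro levy_projection_convergence_axioms.intro)
      (simp_all add: levy_projection_def)
qed

theorem lemma3:
  fixes M :: "'a measure"
    and X :: "real \<Rightarrow> 'a \<Rightarrow> real ^ 'd"
    and A :: "real ^ 'd ^ 'd"
    and \<nu> :: "(real ^ 'd) measure"
    and a :: "real \<Rightarrow> real"
    and \<xi> :: "real \<Rightarrow> real ^ 'd"
    and F :: "real filter"
  assumes levy: "levy_process M X"
    and symA: "transpose A = A"
    and psdA: "\<forall>z. 0 \<le> z \<bullet> (A *v z)"
    and A_nz: "A \<noteq> 0"
    and gauss: "centered_gaussian A \<nu>"
    and a_pos: "\<forall>t>0. a t > 0"
    and c: "F = at_right 0 \<or> F = at_top"
    and conv: "weak_conv_filter (\<lambda>t. distr M borel (\<lambda>\<omega>. a t *\<^sub>R X t \<omega> - \<xi> t)) \<nu> F"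
  shows "(F = at_right 0 \<longrightarrow>
            filterlim a at_top (at_right 0) \<and>
            (\<lambda>t. a (1 / t)) \<sim>[at_top] (\<lambda>t. a (1 / (t + 1))))
       \<and> (F = at_top \<longrightarrow>
            (a \<longlongrightarrow> 0) at_top \<and>
            a \<sim>[at_top] (\<lambda>t. a (t + 1)))"
proof -
  obtain z where z: "0 < z \<bullet> (A *v z)" using exists_quadratic_form_pos[OF symA psdA A_nz] .
  \<comment> \<open>\<open>a\<close> is only positive on \<open>{0<..}\<close>, which is all that matters along \<open>F\<close>.\<close>
  define a' where "a' t = (if 0 < t then a t else 1)" for t
  have F_pos: "\<forall>\<^sub>F t in F. 0 < t" using c by (auto simp: eventually_at_right_less)
  interpret levy_projection_convergence M X z a' "\<lambda>t. z \<bullet> \<xi> t"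
      "distr \<nu> borel (\<lambda>x. z \<bullet> x)" "z \<bullet> (A *v z)" F
    unfolding a'_def[abs_def] by (rule levy_projection_convergenceI[OF levy gauss z a_pos F_pos conv])
  have eq_at_0: "\<forall>\<^sub>F t in at_right 0. a' t = a t"
    using eventually_at_right_less[of 0] by eventually_elim (simp add: a'_def)
  have eq_at_top: "\<forall>\<^sub>F t in at_top. a' t = a t" "\<forall>\<^sub>F t in at_top. a' (t + 1) = a (t + 1)"
    "\<forall>\<^sub>F t in at_top. a' (1 / t) = a (1 / t)" "\<forall>\<^sub>F t in at_top. a' (1 / (t + 1)) = a (1 / (t + 1))"
    by (rule eventually_mono[OF eventually_gt_at_top[of 0]], simp add: a'_def)+
  show ?thesis
  proof (intro conjI impI)
    assume F: "F = at_right 0"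
    show "filterlim a at_top (at_right 0)"
      using scale_tendsto_top_at_0[OF F] filterlim_cong[OF refl refl eq_at_0] by simp
    show "(\<lambda>t. a (1 / t)) \<sim>[at_top] (\<lambda>t. a (1 / (t + 1)))"
      using scale_asymp_equiv_at_0[OF F] asymp_equiv_cong[OF eq_at_top(3,4)] by simp
  next
    assume F: "F = at_top"
    show "(a \<longlongrightarrow> 0) at_top"
      using scale_tendsto_0_at_top[OF F] eq_at_top(1) by (rule Lim_transform_eventually)
    show "a \<sim>[at_top] (\<lambda>t. a (t + 1))"
      using scale_asymp_equiv_at_top[OF F] asymp_equiv_cong[OF eq_at_top(1,2)] by simp
  qed
qed

end
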